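(* Let $M(C,\bar\xi,\pi)$ be a Myller configuration with Darboux frame $(\bar\xi,\bar\mu,\bar v)$ and invariants $G,K,T$ such that $(G(s),K(s))\neq(0,0)$ for all $s$, and suppose $C$ is a $\bar\xi$-helix in $M$ with fixed unit axis $\bar d_\xi$ and constant angle $\theta$, $\langle\bar\xi,\bar d_\xi\rangle=\cos\theta$. Then, for one choice of sign $\epsilon\in\{1,-1\}$, $$\bar d_\xi=(\cos\theta)\bar\xi-\epsilon\sin\theta\frac{K}{\sqrt{G^2+K^2}}\bar\mu+\epsilon\sin\theta\frac{G}{\sqrt{G^2+K^2}}\bar v .$$
   Context: Let $C$ be a smooth curve in Euclidean 3-space $E^3$ parametrized by arclength $s$; primes denote $d/ds$. A Myller configuration $M(C,\bar\xi,\pi)$ consists of a smooth unit vector field $\bar\xi(s)$ along $C$ and a smooth field of oriented planes $\pi(s)$ with $\bar\xi(s)\in\pi(s)$. Let $\bar v(s)$ be the unit normal of $\pi(s)$ and $\bar\mu=\bar v\times\bar\xi$. The Darboux frame $(\bar\xi,\bar\mu,\bar v)$ is positively oriented orthonormal with $\bar\xi'=G\bar\mu+K\bar v$, $\bar\mu'=-G\bar\xi+T\bar v$, $\bar v'=-K\bar\xi-T\bar\mu$ ($G,K,T$: geodesic curvature, normal curvature, geodesic torsion). $C$ is a $\bar\xi$-helix in $M$ if there are a constant unit vector $\bar d_\xi$ (the axis) and a constant $\theta$ with $\langle\bar\xi,\bar d_\xi\rangle=\cos\theta$ along $C$. *)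

theory Defs
  imports "HOL-Analysis.Analysis" "HOL-Analysis.Cross3"
begin

text \<open>A Myller configuration along a curve r parametrized by arclength on an
open interval I: unit field xi, plane field given by its unit normal v,
mu = v x xi, with Darboux equations and continuous invariants G K T.\<close>

definition myller_config ::
  "real set \<Rightarrow> (real \<Rightarrow> real^3) \<Rightarrow> (real \<Rightarrow> real^3) \<Rightarrow> (real \<Rightarrow> real^3) \<Rightarrow> (real \<Rightarrow> real^3)
   \<Rightarrow> (real \<Rightarrow> real) \<Rightarrow> (real \<Rightarrow> real) \<Rightarrow> (real \<Rightarrow> real) \<Rightarrow> bool" where
  "myller_config I r xi mu v G K T \<longleftrightarrow>
     open I \<and> is_interval I \<and> I \<noteq> {} \<and>
     (\<forall>s\<in>I. r differentiable at s \<and> norm (vector_derivative r (at s)) = 1) \<and>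
     (\<forall>s\<in>I. norm (xi s) = 1 \<and> norm (v s) = 1 \<and> xi s \<bullet> v s = 0 \<and>
             mu s = cross3 (v s) (xi s)) \<and>
     continuous_on I G \<and> continuous_on I K \<and> continuous_on I T \<and>
     (\<forall>s\<in>I. (xi has_vector_derivative (G s *\<^sub>R mu s + K s *\<^sub>R v s)) (at s)) \<and>
     (\<forall>s\<in>I. (mu has_vector_derivative (- G s *\<^sub>R xi s + T s *\<^sub>R v s)) (at s)) \<and>
     (\<forall>s\<in>I. (v has_vector_derivative (- K s *\<^sub>R xi s - T s *\<^sub>R mu s)) (at s))"

end

theory Submission
  imports Defs
begin

(* Differentiating <xi, d> = cos theta along the curve gives <G mu + K v, d> = 0, so the pair
   of components (<mu, d>, <v, d>) is orthogonal to (G, K) and hence equals c (-K, G)/sqrt(G^2 + K^2)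
   for a continuous function c.  Since |d| = 1, c^2 = sin^2 theta; a continuous function with
   constant square on the interval I is constant, so c = epsilon sin theta with a fixed sign. *)

lemma coords_orthogonal_to_pair:
  fixes a b g k :: real
  assumes "g * a + k * b = 0" "(g, k) \<noteq> (0, 0)"
  defines "n \<equiv> sqrt (g\<^sup>2 + k\<^sup>2)"
  shows "a = - ((b * g - a * k) / n * k / n)" "b = (b * g - a * k) / n * g / n"
    and "((b * g - a * k) / n)\<^sup>2 = a\<^sup>2 + b\<^sup>2"
proof -
  have "g\<^sup>2 + k\<^sup>2 > 0" using assms(2) by (auto simp: sum_power2_gt_zero_iff)
  then have n: "n > 0" "n\<^sup>2 = g\<^sup>2 + k\<^sup>2" unfolding n_def by simp_all
  have "a * (g\<^sup>2 + k\<^sup>2) + (b * g - a * k) * k = g * (g * a + k * b)"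
    and "b * (g\<^sup>2 + k\<^sup>2) - (b * g - a * k) * g = k * (g * a + k * b)"
    and "(b * g - a * k)\<^sup>2 = (a\<^sup>2 + b\<^sup>2) * (g\<^sup>2 + k\<^sup>2) - (g * a + k * b)\<^sup>2"
    by (simp_all add: algebra_simps power2_eq_square)
  then have "a * n\<^sup>2 = - ((b * g - a * k) * k)" "b * n\<^sup>2 = (b * g - a * k) * g"
    and "(b * g - a * k)\<^sup>2 = (a\<^sup>2 + b\<^sup>2) * n\<^sup>2"
    unfolding n(2) assms(1) by simp_all
  then show "a = - ((b * g - a * k) / n * k / n)" "b = (b * g - a * k) / n * g / n"
    and "((b * g - a * k) / n)\<^sup>2 = a\<^sup>2 + b\<^sup>2"
    using n(1) by (simp_all add: field_simps power2_eq_square)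
qed

lemma connected_continuous_square_constant:
  fixes f :: "'a::topological_space \<Rightarrow> real"
  assumes "connected S" "continuous_on S f" "\<And>x. x \<in> S \<Longrightarrow> (f x)\<^sup>2 = c\<^sup>2"
  obtains \<epsilon> where "\<epsilon> \<in> {1, -1}" "\<forall>x\<in>S. f x = \<epsilon> * c"
proof -
  have "f ` S \<subseteq> {c, -c}" using assms(3) by (auto simp: power2_eq_iff)
  then have "f constant_on S"
    using continuous_finite_range_constant assms(1,2) finite_subset by blast
  then obtain y where y: "\<forall>x\<in>S. f x = y" unfolding constant_on_def by blast
  show thesis
  proof (cases "S = {}")
    case True
    then show thesis using that[of 1] by simp
  next
    case False
    then have "y = c \<or> y = -c" using y \<open>f ` S \<subseteq> {c, -c}\<close> by auto
    then show thesis using that y by (metis insertI1 insertI2 mult_1 mult_minus1 singletonI)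
  qed
qed

lemma has_vector_derivative_inner_locally_constant:
  fixes f :: "real \<Rightarrow> 'a::real_inner"
  assumes "open S" "s \<in> S" "(f has_vector_derivative f') (at s)" "\<forall>t\<in>S. f t \<bullet> d = c"
  shows "f' \<bullet> d = 0"
proof -
  have "((\<lambda>t. f t \<bullet> d) has_derivative (\<lambda>h. (h *\<^sub>R f') \<bullet> d)) (at s)"
    using has_derivative_inner_left assms(3) unfolding has_vector_derivative_def by blast
  then have "((\<lambda>t. c) has_derivative (\<lambda>h. (h *\<^sub>R f') \<bullet> d)) (at s)"
    by (rule has_derivative_transform_within_open[OF _ assms(1,2)]) (use assms(4) in auto)
  then have "(\<lambda>h. (h *\<^sub>R f') \<bullet> d) = (\<lambda>h. 0)"
    using has_derivative_const has_derivative_unique by blast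
  then show ?thesis by (metis scaleR_one)
qed

lemma cross_cross_left: "cross3 (cross3 a b) c = (a \<bullet> c) *\<^sub>R b - (b \<bullet> c) *\<^sub>R a"
  using exhaust_3 by (force simp add: cross3_simps)

lemma norm_cross3_orthonormal:
  fixes x v :: "real^3"
  assumes "norm x = 1" "norm v = 1" "x \<bullet> v = 0"
  shows "norm (cross3 v x) = 1"
  using norm_cross_dot[of v x] assms
  by (simp add: inner_commute power2_eq_1_iff) (metis norm_ge_zero neg_0_le_iff_le not_one_le_zero)

lemma orthonormal_cross3_expansion:
  fixes x v d :: "real^3"
  assumes "norm x = 1" "norm v = 1" "x \<bullet> v = 0"
  defines "m \<equiv> cross3 v x"
  shows "d = (d \<bullet> x) *\<^sub>R x + (d \<bullet> m) *\<^sub>R m + (d \<bullet> v) *\<^sub>R v"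
proof -
  define w where "w = d - ((d \<bullet> x) *\<^sub>R x + (d \<bullet> m) *\<^sub>R m + (d \<bullet> v) *\<^sub>R v)"
  have unit: "x \<bullet> x = 1" "v \<bullet> v = 1" "m \<bullet> m = 1"
    using assms norm_cross3_orthonormal[OF assms(1-3)] by (simp_all add: dot_square_norm)
  have orth: "x \<bullet> m = 0" "v \<bullet> m = 0"
    unfolding m_def by (simp_all add: dot_cross_self)
  have "x \<bullet> w = 0" "v \<bullet> w = 0" "m \<bullet> w = 0"
    unfolding w_def using unit orth assms(3)
    by (simp_all add: inner_diff_right inner_add_right inner_commute)
  then have "m \<bullet> w = 0" "cross3 m w = 0"
    unfolding m_def cross_cross_left by simp_all
  moreover have "m \<noteq> 0" using unit by auto
  ultimately have "w = 0" using norm_and_cross_eq_0 by blast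
  then show ?thesis unfolding w_def by simp
qed

lemma myller_config_orthonormal:
  assumes "myller_config I r xi mu v G K T" "s \<in> I"
  shows "norm (xi s) = 1" "norm (mu s) = 1" "norm (v s) = 1"
    and "xi s \<bullet> mu s = 0" "xi s \<bullet> v s = 0" "mu s \<bullet> v s = 0"
  using assms norm_cross3_orthonormal[of "xi s" "v s"]
  by (auto simp: myller_config_def dot_cross_self inner_commute)

lemma myller_config_frame_expansion:
  assumes "myller_config I r xi mu v G K T" "s \<in> I"
  shows "d = (xi s \<bullet> d) *\<^sub>R xi s + (mu s \<bullet> d) *\<^sub>R mu s + (v s \<bullet> d) *\<^sub>R v s"
  using assms orthonormal_cross3_expansion[of "xi s" "v s" d]
  by (auto simp: myller_config_def inner_commute)

lemma myller_config_continuous_on: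
  assumes "myller_config I r xi mu v G K T"
  shows "continuous_on I mu" "continuous_on I v"
  using assms unfolding myller_config_def
  by (meson continuous_at_imp_continuous_on has_vector_derivative_continuous)+

lemma helix_axis_normal_component:
  assumes "myller_config I r xi mu v G K T" "\<forall>s\<in>I. xi s \<bullet> d = c" "s \<in> I"
  shows "G s * (mu s \<bullet> d) + K s * (v s \<bullet> d) = 0"
proof -
  have "(G s *\<^sub>R mu s + K s *\<^sub>R v s) \<bullet> d = 0"
    using assms has_vector_derivative_inner_locally_constant[of I s xi]
    unfolding myller_config_def by blast
  then show ?thesis by (simp add: inner_add_left)
qed

lemma helix_axis_normal_components_sum_squares:
  assumes "myller_config I r xi mu v G K T" "norm d = 1" "\<forall>s\<in>I. xi s \<bullet> d = cos \<theta>" "s \<in> I"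
  shows "(mu s \<bullet> d)\<^sup>2 + (v s \<bullet> d)\<^sup>2 = (sin \<theta>)\<^sup>2"
proof -
  note frame = myller_config_orthonormal[OF assms(1,4)]
  have unit: "xi s \<bullet> xi s = 1" "mu s \<bullet> mu s = 1" "v s \<bullet> v s = 1"
    using frame by (simp_all add: dot_square_norm)
  have expansion: "d = cos \<theta> *\<^sub>R xi s + (mu s \<bullet> d) *\<^sub>R mu s + (v s \<bullet> d) *\<^sub>R v s"
    using myller_config_frame_expansion[OF assms(1,4), of d] assms(3,4) by simp
  have "1 = d \<bullet> d" using assms(2) by (simp add: dot_square_norm)
  also have "\<dots> = (cos \<theta> *\<^sub>R xi s + (mu s \<bullet> d) *\<^sub>R mu s + (v s \<bullet> d) *\<^sub>R v s)
      \<bullet> (cos \<theta> *\<^sub>R xi s + (mu s \<bullet> d) *\<^sub>R mu s + (v s \<bullet> d) *\<^sub>R v s)"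
    using expansion by simp
  also have "\<dots> = (cos \<theta>)\<^sup>2 + (mu s \<bullet> d)\<^sup>2 + (v s \<bullet> d)\<^sup>2"
    using unit frame by (simp add: inner_add_left inner_add_right inner_commute power2_eq_square)
  finally show ?thesis by (simp add: sin_squared_eq)
qed

theorem corollary7:
  fixes I :: "real set" and r xi mu v :: "real \<Rightarrow> real^3"
    and G K T :: "real \<Rightarrow> real" and d :: "real^3" and \<theta> :: real
  assumes "myller_config I r xi mu v G K T"
    and "\<forall>s\<in>I. (G s, K s) \<noteq> (0, 0)"
    and "norm d = 1"
    and "\<forall>s\<in>I. xi s \<bullet> d = cos \<theta>"
  shows "\<exists>\<epsilon>\<in>{1, -1::real}. \<forall>s\<in>I.
           d = cos \<theta> *\<^sub>R xi s
               - (\<epsilon> * sin \<theta> * K s / sqrt ((G s)\<^sup>2 + (K s)\<^sup>2)) *\<^sub>R mu s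
               + (\<epsilon> * sin \<theta> * G s / sqrt ((G s)\<^sup>2 + (K s)\<^sup>2)) *\<^sub>R v s"
proof -
  define n where "n s = sqrt ((G s)\<^sup>2 + (K s)\<^sup>2)" for s
  define c where "c s = ((v s \<bullet> d) * G s - (mu s \<bullet> d) * K s) / n s" for s
  have coords: "mu s \<bullet> d = - (c s * K s / n s)" "v s \<bullet> d = c s * G s / n s"
    and square: "(c s)\<^sup>2 = (sin \<theta>)\<^sup>2" if "s \<in> I" for s
    using coords_orthogonal_to_pair[OF helix_axis_normal_component[OF assms(1,4) that]] assms(2) that
      helix_axis_normal_components_sum_squares[OF assms(1,3,4) that]
    unfolding c_def n_def by auto
  have "connected I"
    using assms(1) by (simp add: myller_config_def is_interval_connected)
  moreover have "continuous_on I c"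
    using assms(1,2) myller_config_continuous_on[OF assms(1)] unfolding c_def n_def myller_config_def
    by (intro continuous_intros) (auto simp: sum_power2_eq_zero_iff)
  ultimately obtain \<epsilon> where "\<epsilon> \<in> {1, -1}" "\<forall>s\<in>I. c s = \<epsilon> * sin \<theta>"
    using connected_continuous_square_constant square by metis
  then show ?thesis
    using myller_config_frame_expansion[OF assms(1), of _ d] assms(4) coords
    unfolding n_def by (intro bexI[of _ \<epsilon>]) auto
qed

end
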